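(* Let $r$ be an odd prime, $p=2r$, and $\mu_i=(-1)^iA_p^{i(i+2)}$. For distinct $i,j\in\{0,1,\dots,r-2\}$, up to a unit of $\mathcal{O}_p$: (1) $\mu_i-\mu_j\sim 1$ if $i\not\equiv j\pmod 2$ and $(j-i)(i+j+2)\not\equiv0\pmod r$; (2) $\mu_i-\mu_j\sim\sqrt2$ if $i\not\equiv j\pmod 2$ and $(j-i)(i+j+2)\equiv0\pmod r$; (3) $\mu_i-\mu_j\sim 1+\alpha_p^4$ if $i\equiv j\pmod 2$.
   Context: $\alpha_p=e^{2\pi i/(4p)}$, $A_p=\alpha_p^2$, $\mathcal{O}_p=\mathbb{Z}[\alpha_p]$. $\mu_i$ is the eigenvalue of the twist map on the basis element $e_i$ of the Kauffman skein module of the solid torus, $0\le i\le d_p-1=r-2$. $a\sim b$ means $a/b$ is a unit of $\mathcal{O}_p$. *)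

theory Defs
  imports Complex_Main "HOL-Number_Theory.Number_Theory"
begin

definition alpha :: "nat \<Rightarrow> complex" where
  "alpha p = exp (2 * pi * \<i> / (4 * of_nat p))"

definition Ap :: "nat \<Rightarrow> complex" where
  "Ap p = (alpha p)^2"

definition Op :: "nat \<Rightarrow> complex set" where
  "Op p = {z. \<exists>(c :: nat \<Rightarrow> int) (n :: nat). z = (\<Sum>k<n. of_int (c k) * (alpha p)^k)}"

definition is_unit_Op :: "nat \<Rightarrow> complex \<Rightarrow> bool" where
  "is_unit_Op p u \<longleftrightarrow> u \<in> Op p \<and> u \<noteq> 0 \<and> inverse u \<in> Op p"

definition assoc_Op :: "nat \<Rightarrow> complex \<Rightarrow> complex \<Rightarrow> bool" where
  "assoc_Op p a b \<longleftrightarrow> b \<noteq> 0 \<and> is_unit_Op p (a / b)"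

definition mu :: "nat \<Rightarrow> nat \<Rightarrow> complex" where
  "mu p i = (-1)^i * (Ap p)^(i * (i + 2))"

end

theory Submission
  imports Defs "HOL-Analysis.Complex_Transcendental" "HOL-Computational_Algebra.Polynomial"
begin

text \<open>
  For i < j put e = j - i and d = e (i + j + 2); then mu j = mu i (-1)^e A^d, so mu i - mu j is a
  unit times 1 - (-1)^e A^d, where A = alpha^2 is a primitive 4r-th root of unity.
  If e is odd and r does not divide d, then z = -A^d satisfies z^(2r) = -1 and z^4 \<noteq> 1: its order
  is divisible by 4 and by r, hence not a prime power, and 1 - z is a unit.
  If e is odd and r divides d, then A^(2d) = -1, so (1 + A^d)^2 = 2 A^d and 1 + A^d = \<plusminus>sqrt 2 alpha^d.
  If e is even, then 4 divides d, r does not, and A^d = \<omega>^(d/4) for the primitive r-th root of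
  unity \<omega> = alpha^8. All 1 - \<omega>^k with r not dividing k are associates, and k = (r + 1)/2 gives
  1 - \<omega>^k = 1 + alpha^4.
\<close>

lemma power_eq_if_cong:
  fixes \<omega> :: "'a :: monoid_mult"
  assumes "\<omega> ^ r = 1" and "[a = b] (mod r)"
  shows "\<omega> ^ a = \<omega> ^ b"
proof -
  have "\<omega> ^ n = \<omega> ^ (n mod r)" for n
  proof -
    have "\<omega> ^ n = (\<omega> ^ r) ^ (n div r) * \<omega> ^ (n mod r)"
      by (simp flip: power_mult power_add)
    then show ?thesis
      using assms(1) by simp
  qed
  then show ?thesis
    using assms(2) unfolding cong_def by metis
qed

lemma cong_solvable_mod_prime:
  fixes a b r :: nat
  assumes "prime r" and "\<not> r dvd a"
  shows "\<exists>k. [a * k = b] (mod r)"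
proof -
  have "coprime a r"
    using prime_imp_coprime[OF assms] by (simp add: coprime_commute)
  then obtain x where "[a * x = 1] (mod r)"
    using cong_solve_coprime_nat by auto
  then have "[a * (x * b) = b] (mod r)"
    using cong_scalar_right[of "a * x" 1 r b] by (simp add: mult.assoc)
  then show ?thesis ..
qed

lemma one_diff_power_eq_mult_if_cong:
  fixes \<omega> :: "'a :: comm_ring_1"
  assumes "\<omega> ^ r = 1" and "[n * k = m] (mod r)"
  shows "1 - \<omega> ^ m = (1 - \<omega> ^ n) * (\<Sum>i<k. \<omega> ^ (n * i))"
  using one_diff_power_eq[of "\<omega> ^ n" k] power_eq_if_cong[OF assms]
  by (simp add: power_mult)

text \<open>The inverse of 1 - z is read off from the geometric sums: z^4 is a nontrivial r-th root of
  unity, so the bracket times 1 - z equals r - 2 (r div 2) = 1.\<close>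

lemma one_diff_mult_explicit_inverse:
  fixes z :: "'a :: idom"
  assumes "odd r" and z_2r: "z ^ (2 * r) = -1" and "z ^ 4 \<noteq> 1"
  shows "(1 - z) * ((\<Sum>k<r. \<Sum>l<4 * k. z ^ l) - of_nat (r div 2) * (\<Sum>l<2 * r. z ^ l)) = 1"
proof -
  have "(z ^ 4) ^ r = (z ^ (2 * r)) ^ 2"
    by (simp flip: power_mult add: mult.commute)
  then have "(1 - z ^ 4) * (\<Sum>k<r. (z ^ 4) ^ k) = 0"
    using z_2r by (simp flip: one_diff_power_eq)
  then have roots_sum: "(\<Sum>k<r. (z ^ 4) ^ k) = 0"
    using \<open>z ^ 4 \<noteq> 1\<close> by (metis mult_eq_0_iff right_minus_eq)
  have geometric: "(1 - z) * (\<Sum>l<n. z ^ l) = 1 - z ^ n" for n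
    by (rule one_diff_power_eq[symmetric])
  have "(1 - z) * ((\<Sum>k<r. \<Sum>l<4 * k. z ^ l) - of_nat (r div 2) * (\<Sum>l<2 * r. z ^ l))
      = (\<Sum>k<r. (1 - z) * (\<Sum>l<4 * k. z ^ l)) - of_nat (r div 2) * ((1 - z) * (\<Sum>l<2 * r. z ^ l))"
    by (simp only: right_diff_distrib sum_distrib_left mult.left_commute)
  also have "\<dots> = (\<Sum>k<r. 1 - (z ^ 4) ^ k) - of_nat (r div 2) * (1 - z ^ (2 * r))"
    by (simp only: geometric power_mult)
  also have "\<dots> = of_nat r - of_nat (r div 2) * 2"
    using z_2r by (simp add: sum_subtractf roots_sum)
  also have "\<dots> = 1"
    using arg_cong[OF odd_two_times_div_two_succ[OF \<open>odd r\<close>, symmetric], of "of_nat :: nat \<Rightarrow> 'a"]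
    by (simp add: algebra_simps)
  finally show ?thesis .
qed

lemma one_plus_square_eq_sqrt2_mult:
  fixes c :: complex
  assumes "c ^ 4 = -1"
  shows "1 + c\<^sup>2 = sqrt 2 * c \<or> 1 + c\<^sup>2 = - (sqrt 2 * c)"
proof -
  have "(1 + c\<^sup>2)\<^sup>2 = 1 + 2 * c\<^sup>2 + c ^ 4"
    by (simp add: power2_sum flip: power_mult)
  also have "\<dots> = 2 * c\<^sup>2"
    using assms by simp
  also have "\<dots> = (sqrt 2 * c)\<^sup>2"
    by (simp add: power_mult_distrib flip: of_real_power)
  finally show ?thesis
    by (simp add: power2_eq_iff)
qed

lemma alpha_power: "alpha p ^ k = exp (2 * pi * \<i> * of_nat k / (4 * of_nat p))"
  unfolding alpha_def by (simp add: exp_of_nat_mult[symmetric] field_simps)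

lemma alpha_power_eq_1_iff:
  assumes "p > 0"
  shows "alpha p ^ k = 1 \<longleftrightarrow> 4 * p dvd k"
proof
  assume "alpha p ^ k = 1"
  then obtain n :: int where "2 * pi * k / (4 * p) = 2 * n * pi"
    unfolding alpha_power exp_eq_1 by (auto simp: field_simps)
  then have "real_of_int (int k) = real_of_int (int (4 * p) * n)"
    using assms by (simp add: field_simps)
  then have "int k = int (4 * p) * n"
    by (simp only: of_int_eq_iff)
  then show "4 * p dvd k"
    by (metis dvd_triv_left of_nat_dvd_iff)
next
  assume "4 * p dvd k"
  then obtain c where "k = 4 * p * c" ..
  then have "2 * pi * \<i> * of_nat k / (4 * of_nat p) = \<i> * (of_nat c * (of_real pi * 2))"
    using assms by (simp add: field_simps)
  then show "alpha p ^ k = 1"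
    unfolding alpha_power by simp
qed

lemma alpha_power_2p: "p > 0 \<Longrightarrow> alpha p ^ (2 * p) = -1"
  unfolding alpha_power by (simp add: field_simps)

lemma Op_eq_poly: "Op p = {poly q (alpha p) | q. \<forall>k. coeff q k \<in> \<int>}"
proof (intro equalityI subsetI)
  fix z assume "z \<in> Op p"
  then obtain c :: "nat \<Rightarrow> int" and n where z: "z = (\<Sum>k<n. of_int (c k) * alpha p ^ k)"
    unfolding Op_def by blast
  define q where "q = (\<Sum>k<n. monom (of_int (c k) :: complex) k)"
  have "poly q (alpha p) = z"
    unfolding q_def z by (simp add: poly_sum poly_monom)
  moreover have "\<forall>k. coeff q k \<in> \<int>"
    unfolding q_def by (simp add: coeff_sum coeff_monom Ints_sum)
  ultimately show "z \<in> {poly q (alpha p) | q. \<forall>k. coeff q k \<in> \<int>}"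
    by blast
next
  fix z assume "z \<in> {poly q (alpha p) | q. \<forall>k. coeff q k \<in> \<int>}"
  then obtain q where z: "z = poly q (alpha p)" and q: "\<forall>k. coeff q k \<in> \<int>"
    by blast
  have "\<forall>k. \<exists>m :: int. coeff q k = of_int m"
    using q by (auto elim: Ints_cases)
  then obtain c :: "nat \<Rightarrow> int" where c: "\<And>k. coeff q k = of_int (c k)"
    by (metis choice)
  have "z = (\<Sum>k<Suc (degree q). of_int (c k) * alpha p ^ k)"
    unfolding z poly_altdef by (simp add: c lessThan_Suc_atMost)
  then show "z \<in> Op p"
    unfolding Op_def by blast
qed

lemma poly_alpha_in_Op: "(\<And>k. coeff q k \<in> \<int>) \<Longrightarrow> poly q (alpha p) \<in> Op p"
  unfolding Op_eq_poly by blast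

lemma Op_add:
  assumes "x \<in> Op p" "y \<in> Op p" shows "x + y \<in> Op p"
proof -
  obtain qx qy where "x = poly qx (alpha p)" "y = poly qy (alpha p)"
    and "\<forall>k. coeff qx k \<in> \<int>" "\<forall>k. coeff qy k \<in> \<int>"
    using assms unfolding Op_eq_poly by blast
  then show ?thesis
    using poly_alpha_in_Op[of "qx + qy" p] by simp
qed

lemma Op_mult:
  assumes "x \<in> Op p" "y \<in> Op p" shows "x * y \<in> Op p"
proof -
  obtain qx qy where xy: "x = poly qx (alpha p)" "y = poly qy (alpha p)"
    and "\<forall>k. coeff qx k \<in> \<int>" "\<forall>k. coeff qy k \<in> \<int>"
    using assms unfolding Op_eq_poly by blast
  then have "coeff (qx * qy) k \<in> \<int>" for k
    unfolding coeff_mult by (intro Ints_sum Ints_mult) auto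
  then show ?thesis
    unfolding xy poly_mult[symmetric] by (rule poly_alpha_in_Op)
qed

lemma Op_of_int: "of_int m \<in> Op p"
  using poly_alpha_in_Op[of "[:of_int m:]" p] by (simp add: coeff_pCons split: nat.split)

lemma Op_1: "1 \<in> Op p"
  using Op_of_int[of 1] by simp

lemma Op_of_nat: "of_nat m \<in> Op p"
  using Op_of_int[of "int m"] by simp

lemma Op_alpha_power: "alpha p ^ k \<in> Op p"
  using poly_alpha_in_Op[of "monom 1 k" p] by (simp add: poly_monom coeff_monom)

lemma Op_uminus: "x \<in> Op p \<Longrightarrow> - x \<in> Op p"
  using Op_mult[OF Op_of_int[of "-1"]] by simp

lemma Op_diff: "x \<in> Op p \<Longrightarrow> y \<in> Op p \<Longrightarrow> x - y \<in> Op p"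
  using Op_add[OF _ Op_uminus] by simp

lemma Op_power: "x \<in> Op p \<Longrightarrow> x ^ n \<in> Op p"
  by (induction n) (simp_all add: Op_1 Op_mult)

lemma Op_sum: "(\<And>k. k \<in> A \<Longrightarrow> f k \<in> Op p) \<Longrightarrow> sum f A \<in> Op p"
  by (induction A rule: infinite_finite_induct) (use Op_of_int[of 0] in \<open>simp_all add: Op_add\<close>)

lemma is_unit_OpI: "u \<in> Op p \<Longrightarrow> v \<in> Op p \<Longrightarrow> u * v = 1 \<Longrightarrow> is_unit_Op p u"
  unfolding is_unit_Op_def by (metis inverse_unique mult_zero_left zero_neq_one)

lemma is_unit_Op_mult: "is_unit_Op p u \<Longrightarrow> is_unit_Op p v \<Longrightarrow> is_unit_Op p (u * v)"
  unfolding is_unit_Op_def by (simp add: Op_mult inverse_mult_distrib)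

lemma is_unit_Op_uminus: "is_unit_Op p u \<Longrightarrow> is_unit_Op p (- u)"
  unfolding is_unit_Op_def by (simp add: Op_uminus)

lemma is_unit_Op_alpha_power:
  assumes "p > 0" shows "is_unit_Op p (alpha p ^ k)"
proof (rule is_unit_OpI[OF Op_alpha_power Op_alpha_power])
  show "alpha p ^ k * alpha p ^ (4 * p * k - k) = 1"
    using assms alpha_power_eq_1_iff[OF assms, of "4 * p * k"] by (simp flip: power_add)
qed

lemma is_unit_Op_mu: "p > 0 \<Longrightarrow> is_unit_Op p (mu p i)"
  unfolding mu_def Ap_def
  by (metis alpha_power_2p is_unit_Op_alpha_power is_unit_Op_mult power_mult)

lemma assoc_OpI: "b \<noteq> 0 \<Longrightarrow> is_unit_Op p u \<Longrightarrow> assoc_Op p (u * b) b"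
  unfolding assoc_Op_def by simp

lemma assoc_Op_one_iff: "assoc_Op p a 1 \<longleftrightarrow> is_unit_Op p a"
  unfolding assoc_Op_def by simp

lemma assoc_Op_unit_mult: "is_unit_Op p u \<Longrightarrow> assoc_Op p a b \<Longrightarrow> assoc_Op p (u * a) b"
  unfolding assoc_Op_def using is_unit_Op_mult[of p u "a / b"] by simp

lemma is_unit_Op_one_diff:
  assumes "z \<in> Op p" "odd r" "z ^ (2 * r) = -1" "z ^ 4 \<noteq> 1"
  shows "is_unit_Op p (1 - z)"
  by (rule is_unit_OpI[OF _ _ one_diff_mult_explicit_inverse[OF assms(2-4)]])
    (intro Op_diff Op_mult Op_sum Op_power Op_of_nat Op_1 assms(1))+

lemma assoc_Op_one_diff_powers:
  assumes "\<omega> \<in> Op p" "\<omega> ^ r = 1" "\<omega> \<noteq> 1" "prime r" "\<not> r dvd m" "\<not> r dvd n"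
  shows "assoc_Op p (1 - \<omega> ^ m) (1 - \<omega> ^ n)"
proof -
  obtain k l k' where k: "[n * k = m] (mod r)" and l: "[m * l = n] (mod r)" and k': "[n * k' = 1] (mod r)"
    using cong_solvable_mod_prime \<open>prime r\<close> assms(5,6) by metis
  define u v where "u = (\<Sum>i<k. \<omega> ^ (n * i))" and "v = (\<Sum>i<l. \<omega> ^ (m * i))"
  have m_by_n: "1 - \<omega> ^ m = (1 - \<omega> ^ n) * u"
    unfolding u_def by (rule one_diff_power_eq_mult_if_cong[OF assms(2) k])
  have n_by_m: "1 - \<omega> ^ n = (1 - \<omega> ^ m) * v"
    unfolding v_def by (rule one_diff_power_eq_mult_if_cong[OF assms(2) l])
  have "1 - \<omega> ^ 1 = (1 - \<omega> ^ n) * (\<Sum>i<k'. \<omega> ^ (n * i))"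
    by (rule one_diff_power_eq_mult_if_cong[OF assms(2) k'])
  then have "1 - \<omega> ^ n \<noteq> 0"
    using \<open>\<omega> \<noteq> 1\<close> by auto
  moreover have "u * v = 1"
    using m_by_n n_by_m calculation by (simp add: mult_ac)
  then have "is_unit_Op p u"
    by (rule is_unit_OpI[rotated 2]) (simp_all add: u_def v_def Op_sum Op_power assms(1))
  ultimately show ?thesis
    using m_by_n assoc_OpI by (metis mult.commute)
qed

lemma is_unit_Op_one_plus_Ap_power:
  assumes "odd r" "p = 2 * r" "odd d" "\<not> r dvd d"
  shows "is_unit_Op p (1 + Ap p ^ d)"
proof -
  have "p > 0"
    using assms(1,2) odd_pos by simp
  define z where "z = - (alpha p ^ (2 * d))"
  have "z ^ (2 * r) = (alpha p ^ (2 * p)) ^ d"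
    unfolding z_def assms(2) by (simp flip: power_mult add: mult_ac)
  also have "\<dots> = -1"
    using alpha_power_2p[OF \<open>p > 0\<close>] \<open>odd d\<close> by simp
  finally have "z ^ (2 * r) = -1" .
  moreover have "z ^ 4 \<noteq> 1"
  proof
    assume "z ^ 4 = 1"
    then have "alpha p ^ (8 * d) = 1"
      unfolding z_def by (simp flip: power_mult add: mult_ac)
    then have "8 * r dvd 8 * d"
      using alpha_power_eq_1_iff[OF \<open>p > 0\<close>] assms(2) by simp
    then show False
      using \<open>\<not> r dvd d\<close> by simp
  qed
  moreover have "z \<in> Op p"
    unfolding z_def by (intro Op_uminus Op_alpha_power)
  ultimately have "is_unit_Op p (1 - z)"
    using is_unit_Op_one_diff \<open>odd r\<close> by blast
  then show ?thesis
    by (simp add: z_def Ap_def power_mult)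
qed

lemma assoc_Op_one_plus_Ap_power_sqrt2:
  assumes "p = 2 * r" "odd d" "r dvd d"
  shows "assoc_Op p (1 + Ap p ^ d) (sqrt 2)"
proof -
  obtain m where d: "d = r * m"
    using assms(3) ..
  then have "odd m" "p > 0"
    using assms(1,2) odd_pos[of r] by auto
  have "(alpha p ^ d) ^ 4 = (alpha p ^ (2 * p)) ^ m"
    unfolding d assms(1) by (simp flip: power_mult add: mult_ac)
  also have "\<dots> = -1"
    using alpha_power_2p[OF \<open>p > 0\<close>] \<open>odd m\<close> by simp
  finally have "1 + (alpha p ^ d)\<^sup>2 = sqrt 2 * alpha p ^ d \<or> 1 + (alpha p ^ d)\<^sup>2 = - (sqrt 2 * alpha p ^ d)"
    by (rule one_plus_square_eq_sqrt2_mult)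
  moreover have "(alpha p ^ d)\<^sup>2 = Ap p ^ d"
    unfolding Ap_def by (simp flip: power_mult add: mult.commute)
  ultimately obtain \<epsilon> where "is_unit_Op p \<epsilon>" "1 + Ap p ^ d = \<epsilon> * sqrt 2"
    using is_unit_Op_alpha_power[OF \<open>p > 0\<close>, of d] is_unit_Op_uminus
    by (metis mult.commute mult_minus_left)
  then show ?thesis
    by (simp add: assoc_OpI)
qed

lemma assoc_Op_one_diff_Ap_power:
  assumes "prime r" "odd r" "p = 2 * r" "4 dvd d" "\<not> r dvd d"
  shows "assoc_Op p (1 - Ap p ^ d) (1 + alpha p ^ 4)"
proof -
  obtain m where d: "d = 4 * m"
    using assms(4) ..
  have "p > 0" "r > 2"
    using assms(1-3) prime_ge_2_nat[OF assms(1)] by (auto intro: le_neq_implies_less)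
  define \<omega> where "\<omega> = alpha p ^ 8"
  define s where "s = Suc r div 2"
  have "\<omega> ^ r = 1"
    unfolding \<omega>_def using alpha_power_eq_1_iff[OF \<open>p > 0\<close>] assms(3) by (simp flip: power_mult)
  moreover have "\<omega> \<noteq> 1"
    unfolding \<omega>_def using alpha_power_eq_1_iff[OF \<open>p > 0\<close>] assms(3) \<open>r > 2\<close> by simp
  moreover have "\<not> r dvd m"
    using \<open>\<not> r dvd d\<close> unfolding d by (meson dvd_mult)
  moreover have "\<not> r dvd s"
    unfolding s_def using \<open>r > 2\<close> by (simp add: nat_dvd_not_less)
  ultimately have "assoc_Op p (1 - \<omega> ^ m) (1 - \<omega> ^ s)"
    using assoc_Op_one_diff_powers Op_alpha_power \<open>prime r\<close> unfolding \<omega>_def by blast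
  moreover have "\<omega> ^ m = Ap p ^ d"
    unfolding \<omega>_def Ap_def d by (simp flip: power_mult)
  moreover have "\<omega> ^ s = - (alpha p ^ 4)"
  proof -
    have "8 * s = 2 * p + 4"
      unfolding s_def assms(3) using \<open>odd r\<close> by presburger
    then show ?thesis
      unfolding \<omega>_def using alpha_power_2p[OF \<open>p > 0\<close>] by (simp flip: power_mult add: power_add)
  qed
  ultimately show ?thesis
    by simp
qed

lemma mu_eq_mu_mult:
  assumes "i \<le> j"
  shows "mu p j = mu p i * ((-1) ^ (j - i) * Ap p ^ ((j - i) * (i + j + 2)))"
proof -
  obtain e where j: "j = i + e"
    using le_Suc_ex[OF assms] ..
  have "j * (j + 2) = i * (i + 2) + e * (i + j + 2)"
    unfolding j by (simp add: algebra_simps)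
  then show ?thesis
    unfolding mu_def j by (simp add: power_add mult_ac)
qed

lemma mu_diff_eq_unit_mult:
  assumes "p > 0" "i \<noteq> j"
  shows "\<exists>\<epsilon>. is_unit_Op p \<epsilon> \<and> mu p i - mu p j
           = \<epsilon> * (1 - (-1) ^ (max i j - min i j) * Ap p ^ ((max i j - min i j) * (i + j + 2)))"
proof (cases "i < j")
  case True
  then show ?thesis
    using is_unit_Op_mu[OF assms(1)] mu_eq_mu_mult[of i j p]
    by (intro exI[of _ "mu p i"]) (simp add: algebra_simps)
next
  case False
  then show ?thesis
    using is_unit_Op_uminus[OF is_unit_Op_mu[OF assms(1)]] mu_eq_mu_mult[of j i p]
    by (intro exI[of _ "- mu p j"]) (simp add: algebra_simps)
qed

lemma even_add_iff_even_dist: "even (i + j) \<longleftrightarrow> even (max i j - min i j :: nat)"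
  by (cases "i \<le> j") (auto simp: max_def min_def)

lemma cong_mod_2_iff_even_dist: "[i = j] (mod 2) \<longleftrightarrow> even (max i j - min i j :: nat)"
  unfolding cong_def by (auto simp: max_def min_def mod2_eq_if)

lemma cong_dist_product_iff_dvd:
  "[(int j - int i) * (int i + int j + 2) = 0] (mod int r)
     \<longleftrightarrow> r dvd (max i j - min i j) * (i + j + 2)"
proof -
  have dist: "int (max i j - min i j) = \<bar>int j - int i\<bar>"
    by (simp add: max_def min_def of_nat_diff)
  have "\<bar>(int j - int i) * (int i + int j + 2)\<bar> = \<bar>int j - int i\<bar> * int (i + j + 2)"
    by (simp add: abs_mult)
  also have "\<dots> = int ((max i j - min i j) * (i + j + 2))"
    by (simp only: of_nat_mult dist)
  finally have "int r dvd (int j - int i) * (int i + int j + 2)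
      \<longleftrightarrow> int r dvd int ((max i j - min i j) * (i + j + 2))"
    by (metis dvd_abs_iff)
  then show ?thesis
    unfolding cong_0_iff by (simp only: of_nat_dvd_iff)
qed

lemma odd_dist_product:
  "odd (max i j - min i j :: nat) \<Longrightarrow> odd ((max i j - min i j) * (i + j + 2))"
  by (simp only: even_mult_iff even_add_iff_even_dist[symmetric]) simp

lemma even_dist_product:
  assumes "prime r" "odd r" "i \<le> r - 2" "j \<le> r - 2" "i \<noteq> j" "even (max i j - min i j :: nat)"
  shows "4 dvd (max i j - min i j) * (i + j + 2)"
    and "\<not> r dvd (max i j - min i j) * (i + j + 2)"
proof -
  have "even (i + j + 2)"
    using assms(6) by (simp only: even_add_iff_even_dist[symmetric]) simp
  from mult_dvd_mono[OF assms(6) this] show "4 dvd (max i j - min i j) * (i + j + 2)"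
    by simp
  have "0 < max i j - min i j" "max i j - min i j < r"
    using assms(3-5) by (auto simp: max_def min_def)
  then have "\<not> r dvd max i j - min i j"
    by (simp add: nat_dvd_not_less)
  moreover have "\<not> r dvd i + j + 2"
  proof
    assume "r dvd i + j + 2"
    then have "2 * r dvd i + j + 2"
      using \<open>even (i + j + 2)\<close> \<open>odd r\<close> by (simp add: divides_mult)
    moreover have "i + j + 2 < 2 * r"
      using assms(1,3,4) prime_ge_2_nat[of r] by linarith
    ultimately show False
      by (simp add: nat_dvd_not_less)
  qed
  ultimately show "\<not> r dvd (max i j - min i j) * (i + j + 2)"
    using prime_dvd_mult_iff[OF \<open>prime r\<close>] by blast
qed

theorem lemma3p2:
  fixes r p i j :: nat
  assumes "prime r" and "odd r" and "p = 2 * r"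
    and "i \<le> r - 2" and "j \<le> r - 2" and "i \<noteq> j"
  shows "(\<not> [i = j] (mod 2) \<and>
           \<not> [(int j - int i) * (int i + int j + 2) = 0] (mod (int r))
           \<longrightarrow> assoc_Op p (mu p i - mu p j) 1)
       \<and> (\<not> [i = j] (mod 2) \<and>
           [(int j - int i) * (int i + int j + 2) = 0] (mod (int r))
           \<longrightarrow> assoc_Op p (mu p i - mu p j) (complex_of_real (sqrt 2)))
       \<and> ([i = j] (mod 2)
           \<longrightarrow> assoc_Op p (mu p i - mu p j) (1 + (alpha p)^4))"
proof -
  define e d where "e = max i j - min i j" and "d = (max i j - min i j) * (i + j + 2)"
  have "p > 0"
    using assms(2,3) odd_pos[of r] by simp
  then obtain \<epsilon> where \<epsilon>: "is_unit_Op p \<epsilon>" "mu p i - mu p j = \<epsilon> * (1 - (-1) ^ e * Ap p ^ d)"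
    using mu_diff_eq_unit_mult assms(6) unfolding e_def d_def by blast
  have parity: "[i = j] (mod 2) \<longleftrightarrow> even e"
    unfolding e_def by (rule cong_mod_2_iff_even_dist)
  have divisibility: "[(int j - int i) * (int i + int j + 2) = 0] (mod (int r)) \<longleftrightarrow> r dvd d"
    unfolding d_def by (rule cong_dist_product_iff_dvd)
  have "assoc_Op p (mu p i - mu p j) 1" if "odd e" "\<not> r dvd d"
    using is_unit_Op_one_plus_Ap_power[OF assms(2,3) odd_dist_product] that \<epsilon>
    unfolding assoc_Op_one_iff e_def d_def by (simp add: is_unit_Op_mult)
  moreover have "assoc_Op p (mu p i - mu p j) (sqrt 2)" if "odd e" "r dvd d"
    using assoc_Op_one_plus_Ap_power_sqrt2[OF assms(3) odd_dist_product] that \<epsilon>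
    unfolding e_def d_def by (simp add: assoc_Op_unit_mult)
  moreover have "assoc_Op p (mu p i - mu p j) (1 + alpha p ^ 4)" if "even e"
    using assoc_Op_one_diff_Ap_power[OF assms(1-3) even_dist_product[OF assms(1,2,4-6)]] that \<epsilon>
    unfolding e_def d_def by (simp add: assoc_Op_unit_mult)
  ultimately show ?thesis
    unfolding parity divisibility by blast
qed

end
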